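(* Let $t\in\mathcal{N}$ and let $\Phi\triangleright\Gamma\vdash^{(b,e,m,f)}t:\sigma$ be a derivation in system $\mathscr{E}$ such that $\mathrm{tight}(\Gamma)$. Then $\sigma$ is tight and the last rule of $\Phi$ does not belong to $\{(\mathrm{app}),(\mathrm{abs}),(\mathrm{abs_p}),(\mathrm{pair}),(\mathrm{pair_p})\}$.
   Context: Pair pattern calculus: patterns $p,q ::= x\mid\langle p,q\rangle$ (linear); $\mathrm{var}(p)$ = variables of $p$; $p\# q$ means $\mathrm{var}(p)\cap\mathrm{var}(q)=\emptyset$. Terms $t,u ::= x\mid\lambda p.t\mid\langle t,u\rangle\mid t\,u\mid t[p/u]$, with $\mathrm{var}(p)$ bound in $t$ in $\lambda p.t$ and $t[p/u]$; terms modulo $\alpha$. Pure canonical forms: $\mathcal{N} ::= x\mid\mathcal{N}\,t\mid\mathcal{N}[\langle p_1,p_2\rangle/\mathcal{N}]$. System $\mathscr{E}$. Types: tight types $\mathtt{t} ::= \bullet_{\mathcal{N}}\mid\bullet_{\mathcal{M}}$; types $\sigma ::= \mathtt{t}\mid \mathcal{A}_1\times\mathcal{A}_2\mid \mathcal{A}\to\sigma$; multi-types $\mathcal{A} ::= [\sigma_k]_{k\in K}$ (finite multisets, possibly empty $[\,]$). Contexts map variables to multi-types, $\mathrm{dom}(\Gamma)$ = variables with non-empty multi-type; $\Gamma\wedge\Delta$ pointwise multiset union; $\Gamma|_p$ restriction to $\mathrm{var}(p)$; $\Gamma\setminus\mathrm{var}(p)$ removal. $\mathrm{tight}(\sigma)$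 iff $\sigma\in\{\bullet_{\mathcal{N}},\bullet_{\mathcal{M}}\}$, extended elementwise to multi-types and contexts. Rules: (pat_v) $x:\mathcal{A}\Vdash^{(1,0,0)} x:\mathcal{A}$. (pat_×) from $\Gamma\Vdash^{(e_p,m_p,f_p)}p:\mathcal{A}$, $\Delta\Vdash^{(e_q,m_q,f_q)}q:\mathcal{B}$, $p\#q$ infer $\Gamma\wedge\Delta\Vdash^{(e_p+e_q,1+m_p+m_q,f_p+f_q)}\langle p,q\rangle:[\mathcal{A}\times\mathcal{B}]$. (pat_p) if $\mathrm{dom}(\Gamma)\subseteq\mathrm{var}(\langle p,q\rangle)$ and $\mathrm{tight}(\Gamma)$ then $\Gamma\Vdash^{(0,0,1)}\langle p,q\rangle:[\bullet_{\mathcal{N}}]$. (ax) $x:[\sigma]\vdash^{(0,0,0,0)}x:\sigma$. (abs) from $\Gamma\vdash^{(b,e,m,f)}t:\sigma$ and $\Gamma|_p\Vdash^{(e_p,m_p,f_p)}p:\mathcal{A}$ infer $\Gamma\setminus\mathrm{var}(p)\vdash^{(b+1,e+e_p,m+m_p,f+f_p)}\lambda p.t:\mathcal{A}\to\sigma$. (abs_p) from $\Gamma\vdash^{(b,e,m,f)}t:\mathtt{t}$ ($\mathtt{t}$ tight) and $\mathrm{tight}(\Gamma|_p)$ infer $\Gamma\setminus\mathrm{var}(p)\vdash^{(b,e,m,f+1)}\lambda p.t:\bullet_{\mathcal{M}}$. (many) from $(\Gamma_k\vdash^{(b_k,e_k,m_k,f_k)}t:\sigma_k)_{k\in K}$ infer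 $\wedge_k\Gamma_k\vdash^{(\sum b_k,\sum e_k,\sum m_k,\sum f_k)}t:[\sigma_k]_{k\in K}$. (app) from $\Gamma\vdash^{(b_t,e_t,m_t,f_t)}t:\mathcal{A}\to\sigma$ and $\Delta\vdash^{(b_u,e_u,m_u,f_u)}u:\mathcal{A}$ infer $\Gamma\wedge\Delta\vdash^{(b_t+b_u,e_t+e_u,m_t+m_u,f_t+f_u)}t\,u:\sigma$. (app_p) from $\Gamma\vdash^{(b,e,m,f)}t:\bullet_{\mathcal{N}}$ infer $\Gamma\vdash^{(b,e,m,f+1)}t\,u:\bullet_{\mathcal{N}}$. (pair) from $\Gamma\vdash^{(b_t,e_t,m_t,f_t)}t:\mathcal{A}$ and $\Delta\vdash^{(b_u,e_u,m_u,f_u)}u:\mathcal{B}$ infer $\Gamma\wedge\Delta\vdash^{(b_t+b_u,e_t+e_u,m_t+m_u,f_t+f_u)}\langle t,u\rangle:\mathcal{A}\times\mathcal{B}$. (pair_p) $\vdash^{(0,0,0,1)}\langle t,u\rangle:\bullet_{\mathcal{M}}$. (match) from $\Gamma\vdash^{(b_t,e_t,m_t,f_t)}t:\sigma$, $\Gamma|_p\Vdash^{(e_p,m_p,f_p)}p:\mathcal{A}$, $\Delta\vdash^{(b_u,e_u,m_u,f_u)}u:\mathcal{A}$ infer $(\Gamma\setminus\mathrm{var}(p))\wedge\Delta\vdash^{(b_t+b_u,e_t+e_u+e_p,m_t+m_u+m_p,f_t+f_u+f_p)}t[p/u]:\sigma$. *)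

theory Defs
  imports Main "HOL-Library.Multiset"
begin

datatype 'v pat = PVar 'v | PPair "'v pat" "'v pat"

fun pvars :: "'v pat \<Rightarrow> 'v set" where
  "pvars (PVar x) = {x}"
| "pvars (PPair p q) = pvars p \<union> pvars q"

definition disj_pat :: "'v pat \<Rightarrow> 'v pat \<Rightarrow> bool" where
  "disj_pat p q \<longleftrightarrow> pvars p \<inter> pvars q = {}"

fun linear_pat :: "'v pat \<Rightarrow> bool" where
  "linear_pat (PVar x) = True"
| "linear_pat (PPair p q) = (linear_pat p \<and> linear_pat q \<and> disj_pat p q)"

datatype 'v trm =
    Var 'v
  | Lam "'v pat" "'v trm"
  | Pr "'v trm" "'v trm"
  | App "'v trm" "'v trm"
  | Sub "'v trm" "'v pat" "'v trm"   \<comment> \<open>Sub t p u  is  t[p/u]\<close>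

inductive canonical :: "'v trm \<Rightarrow> bool" where
  can_var: "canonical (Var x)"
| can_app: "canonical t \<Longrightarrow> canonical (App t u)"
| can_sub: "canonical t \<Longrightarrow> canonical u \<Longrightarrow> linear_pat (PPair p1 p2) \<Longrightarrow>
            canonical (Sub t (PPair p1 p2) u)"

datatype ty = TN | TM | Prod "ty multiset" "ty multiset" | Arr "ty multiset" ty

definition tight :: "ty \<Rightarrow> bool" where
  "tight s \<longleftrightarrow> s = TN \<or> s = TM"

definition tight_m :: "ty multiset \<Rightarrow> bool" where
  "tight_m A \<longleftrightarrow> (\<forall>s \<in># A. tight s)"

type_synonym 'v ctx = "'v \<Rightarrow> ty multiset"

definition empty_ctx :: "'v ctx" where
  "empty_ctx = (\<lambda>_. {#})"

definition ctx_dom :: "'v ctx \<Rightarrow> 'v set" where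
  "ctx_dom G = {x. G x \<noteq> {#}}"

definition ctx_and :: "'v ctx \<Rightarrow> 'v ctx \<Rightarrow> 'v ctx" where
  "ctx_and G D = (\<lambda>x. G x + D x)"

definition ctx_restr :: "'v ctx \<Rightarrow> 'v pat \<Rightarrow> 'v ctx" where
  "ctx_restr G p = (\<lambda>x. if x \<in> pvars p then G x else {#})"

definition ctx_rem :: "'v ctx \<Rightarrow> 'v pat \<Rightarrow> 'v ctx" where
  "ctx_rem G p = (\<lambda>x. if x \<in> pvars p then {#} else G x)"

definition tight_ctx :: "'v ctx \<Rightarrow> bool" where
  "tight_ctx G \<longleftrightarrow> (\<forall>x. tight_m (G x))"

inductive pat_typ :: "'v ctx \<Rightarrow> 'v pat \<Rightarrow> ty multiset \<Rightarrow> nat \<Rightarrow> nat \<Rightarrow> nat \<Rightarrow> bool" where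
  pat_v: "pat_typ (empty_ctx(x := A)) (PVar x) A 1 0 0"
| pat_x: "pat_typ G p A ep mp fp \<Longrightarrow> pat_typ D q B eq mq fq \<Longrightarrow> disj_pat p q \<Longrightarrow>
          pat_typ (ctx_and G D) (PPair p q) {#Prod A B#} (ep + eq) (1 + mp + mq) (fp + fq)"
| pat_p: "ctx_dom G \<subseteq> pvars (PPair p q) \<Longrightarrow> tight_ctx G \<Longrightarrow> linear_pat (PPair p q) \<Longrightarrow>
          pat_typ G (PPair p q) {#TN#} 0 0 1"

datatype rule = R_ax | R_abs | R_abs_p | R_app | R_app_p | R_pair | R_pair_p | R_match

text \<open>ttyp G t s b e m f r: there is a derivation of G |-^(b,e,m,f) t : s whose last rule is r.
  mtyp is the (many) judgement for multi-types.\<close>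
inductive ttyp :: "'v ctx \<Rightarrow> 'v trm \<Rightarrow> ty \<Rightarrow> nat \<Rightarrow> nat \<Rightarrow> nat \<Rightarrow> nat \<Rightarrow> rule \<Rightarrow> bool"
  and mtyp :: "'v ctx \<Rightarrow> 'v trm \<Rightarrow> ty multiset \<Rightarrow> nat \<Rightarrow> nat \<Rightarrow> nat \<Rightarrow> nat \<Rightarrow> bool" where
  ax: "ttyp (empty_ctx(x := {#s#})) (Var x) s 0 0 0 0 R_ax"
| abs: "ttyp G t s b e m f r \<Longrightarrow> pat_typ (ctx_restr G p) p A ep mp fp \<Longrightarrow>
        ttyp (ctx_rem G p) (Lam p t) (Arr A s) (b + 1) (e + ep) (m + mp) (f + fp) R_abs"
| abs_p: "ttyp G t s b e m f r \<Longrightarrow> tight s \<Longrightarrow> tight_ctx (ctx_restr G p) \<Longrightarrow>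
          ttyp (ctx_rem G p) (Lam p t) TM b e m (f + 1) R_abs_p"
| many_nil: "mtyp empty_ctx t {#} 0 0 0 0"
| many_cons: "ttyp G t s b e m f r \<Longrightarrow> mtyp D t A b' e' m' f' \<Longrightarrow>
              mtyp (ctx_and G D) t (add_mset s A) (b + b') (e + e') (m + m') (f + f')"
| app: "ttyp G t (Arr A s) bt et mt ft r \<Longrightarrow> mtyp D u A bu eu mu fu \<Longrightarrow>
        ttyp (ctx_and G D) (App t u) s (bt + bu) (et + eu) (mt + mu) (ft + fu) R_app"
| app_p: "ttyp G t TN b e m f r \<Longrightarrow> ttyp G (App t u) TN b e m (f + 1) R_app_p"
| pair: "mtyp G t A bt et mt ft \<Longrightarrow> mtyp D u B bu eu mu fu \<Longrightarrow>
         ttyp (ctx_and G D) (Pr t u) (Prod A B) (bt + bu) (et + eu) (mt + mu) (ft + fu) R_pair"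
| pair_p: "ttyp empty_ctx (Pr t u) TM 0 0 0 1 R_pair_p"
| match: "ttyp G t s bt et mt ft r \<Longrightarrow> pat_typ (ctx_restr G p) p A ep mp fp \<Longrightarrow>
          mtyp D u A bu eu mu fu \<Longrightarrow>
          ttyp (ctx_and (ctx_rem G p) D) (Sub t p u) s (bt + bu) (et + eu + ep) (mt + mu + mp)
              (ft + fu + fp) R_match"

end

theory Submission
  imports Defs
begin

text \<open>Tightness of the type goes by induction on the canonical form. The head of an application cannot have a tight arrow type, so only
  (app_p) applies. For \<open>t[\<langle>p\<^sub>1,p\<^sub>2\<rangle>/u]\<close>, the induction hypothesis makes every type of \<open>u\<close>
  tight; a pair pattern with a tight multi-type can only be typed by (pat_p), which forces tight
  types on the pattern variables, so \<open>t\<close> is typed in a tight context as well.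
  The last rule cannot be (abs), (abs_p), (pair) or (pair_p) by the shape of a canonical form,
  nor (app), since its head would have a tight arrow type.\<close>

lemma tight_ctx_and_iff: "tight_ctx (ctx_and G D) \<longleftrightarrow> tight_ctx G \<and> tight_ctx D"
  by (auto simp: tight_ctx_def ctx_and_def tight_m_def)

lemma tight_ctx_subctx: "tight_ctx D \<Longrightarrow> (\<And>x. G x \<subseteq># D x) \<Longrightarrow> tight_ctx G"
  by (auto simp: tight_ctx_def tight_m_def dest: mset_subset_eqD)

lemma tight_ctx_from_rem_restr:
  "tight_ctx (ctx_rem G p) \<Longrightarrow> tight_ctx (ctx_restr G p) \<Longrightarrow> tight_ctx G"
  unfolding tight_ctx_def ctx_restr_def ctx_rem_def by (metis (full_types))

lemma mtyp_elem_ttyp: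
  assumes "mtyp D t A b e m f" and "s \<in># A"
  shows "\<exists>G b e m f r. ttyp G t s b e m f r \<and> (\<forall>x. G x \<subseteq># D x)"
  using assms
proof (induction rule: ttyp_mtyp.inducts(2)[where ?P1.0 = "\<lambda>_ _ _ _ _ _ _ _. True"])
  case (many_cons G t s' b e m f r D A b' e' m' f')
  then consider "s = s'" | "s \<in># A" by auto
  then show ?case
  proof cases
    case 1
    moreover have "\<forall>x. G x \<subseteq># ctx_and G D x" by (simp add: ctx_and_def)
    ultimately show ?thesis using many_cons.hyps(1) by blast
  next
    case 2
    then obtain G' b'' e'' m'' f'' r' where
      "ttyp G' t s b'' e'' m'' f'' r'" "\<forall>x. G' x \<subseteq># D x"
      using many_cons.IH by blast
    moreover have "\<forall>x. D x \<subseteq># ctx_and G D x" by (simp add: ctx_and_def)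
    ultimately show ?thesis by (meson subset_mset.order_trans)
  qed
qed auto

lemma pat_typ_pair_tight_ctx:
  assumes "pat_typ G (PPair p q) A ep mp fp" and "tight_m A"
  shows "tight_ctx G"
  using assms by (cases rule: pat_typ.cases) (auto simp: tight_m_def tight_def)

lemma canonical_ttyp_tight:
  "canonical t \<Longrightarrow> ttyp G t s b e m f r \<Longrightarrow> tight_ctx G \<Longrightarrow> tight s"
proof (induction t arbitrary: G s b e m f r rule: canonical.induct)
  case (can_var x)
  from can_var.prems(1) show ?case
  proof (cases rule: ttyp.cases)
    case ax
    have "tight_m (G x)" using can_var.prems(2) by (simp add: tight_ctx_def)
    then show ?thesis using ax by (simp add: tight_m_def)
  qed
next
  case (can_app t u)
  from can_app.prems(1) show ?case
  proof (cases rule: ttyp.cases)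
    case (app G' A)
    then have "tight (Arr A s)" using can_app.IH can_app.prems(2) by (auto simp: tight_ctx_and_iff)
    then show ?thesis by (simp add: tight_def)
  next
    case app_p
    then show ?thesis by (simp add: tight_def)
  qed
next
  case (can_sub t u p1 p2)
  from can_sub.prems(1) show ?case
  proof (cases rule: ttyp.cases)
    case (match G' bt et mt ft r' A ep mp fp D bu eu mu fu)
    have head_typ: "ttyp G' t s bt et mt ft r'"
      and pat_typ: "pat_typ (ctx_restr G' (PPair p1 p2)) (PPair p1 p2) A ep mp fp"
      and arg_typ: "mtyp D u A bu eu mu fu"
      using match by simp_all
    have rem_tight: "tight_ctx (ctx_rem G' (PPair p1 p2))" and arg_tight: "tight_ctx D"
      using can_sub.prems(2) match by (simp_all add: tight_ctx_and_iff)
    have "tight_m A"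
      unfolding tight_m_def
    proof
      fix s' assume "s' \<in># A"
      then obtain G'' b' e' m' f' r'' where
        "ttyp G'' u s' b' e' m' f' r''" "\<forall>x. G'' x \<subseteq># D x"
        using mtyp_elem_ttyp[OF arg_typ] by blast
      then show "tight s'"
        using can_sub.IH(2) tight_ctx_subctx[OF arg_tight] by blast
    qed
    then have "tight_ctx (ctx_restr G' (PPair p1 p2))"
      using pat_typ_pair_tight_ctx pat_typ by blast
    then have "tight_ctx G'"
      using tight_ctx_from_rem_restr rem_tight by blast
    then show ?thesis using can_sub.IH(1) head_typ by blast
  qed
qed

inductive_cases canonical_LamE[elim!]: "canonical (Lam p t)"
inductive_cases canonical_PrE[elim!]: "canonical (Pr t u)"
inductive_cases canonical_AppE: "canonical (App t u)"

lemma canonical_ttyp_rule: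
  assumes "canonical t" and "ttyp G t s b e m f r"
  shows "r \<in> {R_ax, R_app, R_app_p, R_match}"
  using assms(2,1) by (cases rule: ttyp.cases) auto

lemma canonical_ttyp_not_app:
  assumes "canonical t" and "ttyp G t s b e m f R_app" and "tight_ctx G"
  shows False
  using assms(2)
proof (cases rule: ttyp.cases)
  case (app G' t' A)
  have "canonical t'" using assms(1) app(2) by (auto elim: canonical_AppE)
  then have "tight (Arr A s)"
    using canonical_ttyp_tight app assms(3) by (auto simp: tight_ctx_and_iff)
  then show False by (simp add: tight_def)
qed

theorem lemma3:
  fixes t :: "'v trm" and G :: "'v ctx"
  assumes "canonical t"
    and "ttyp G t s b e m f r"
    and "tight_ctx G"
  shows "tight s \<and> r \<notin> {R_app, R_abs, R_abs_p, R_pair, R_pair_p}"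
  using canonical_ttyp_tight[OF assms] canonical_ttyp_rule[OF assms(1,2)]
    canonical_ttyp_not_app[OF assms(1) _ assms(3)] assms(2)
  by auto

end
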